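(* In each of the four calculi ${\tt Name}$, ${\tt Value}^{\tt LR}$, ${\tt Value}^{\tt RL}$ and ${\tt Need}$ described below, reduction is deterministic: if $E_1,E_2$ are evaluation contexts of the calculus and $r_1,r_2$ are redexes of the calculus (terms matching the left-hand side of one of the two root rules $\mapsto_{\mathtt m}$, $\mapsto_{\mathtt e}$ defining it), then $E_1\langle r_1\rangle=E_2\langle r_2\rangle$ implies $E_1=E_2$ and $r_1=r_2$. Hence every term has at most one way to reduce.
   Context: Terms: $t,u,w ::= x \mid v \mid t\,u \mid t[x\leftarrow u]$, values $v ::= \lambda x.t$. Both $\lambda x.t$ and $t[x\leftarrow u]$ (an explicit substitution) bind $x$ in $t$; terms are taken up to $\alpha$-equivalence and rewriting is capture-avoiding. A context is a term with exactly one occurrence of a hole $\langle\cdot\rangle$; $C\langle t\rangle$ denotes plugging (which may capture variables). Substitution contexts: $L ::= \langle\cdot\rangle \mid L[x\leftarrow t]$. Root rules (for a family of contexts $C$, always assuming $C$ does not capture $x$, i.e. $x\in\mathrm{fv}(C\langle x\rangle)$): dB: $L\langle\lambda x.t\rangle u \mapsto L\langle t[x\leftarrow u]\rangle$; dBv: $L\langle\lambda x.t\rangle L'\langle v\rangle \mapsto L\langle t[x\leftarrow L'\langle v\rangle]\rangle$; ls (w.r.t. $C$): $C\langle x\rangle[x\leftarrow u]\mapsto C\langle u\rangle[x\leftarrow u]$; lsv (w.r.t. $C$): $C\langle x\rangle[x\leftarrow L\langle v\rangle]\mapsto L\langle C\langle v\rangle[x\leftarrow v]\rangle$. The four calculi,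 each given by evaluation contexts, a multiplicative root rule $\mapsto_{\mathtt m}$ and an exponential root rule $\mapsto_{\mathtt e}$: ${\tt Name}$: $H ::= \langle\cdot\rangle \mid H\,t \mid H[x\leftarrow t]$; $\mapsto_{\mathtt m}$ = dB; $\mapsto_{\mathtt e}$ = ls w.r.t. contexts $H$. ${\tt Value}^{\tt LR}$: $V ::= \langle\cdot\rangle \mid V\,t \mid L\langle v\rangle V \mid V[x\leftarrow t]$; $\mapsto_{\mathtt m}$ = dBv; $\mapsto_{\mathtt e}$ = lsv w.r.t. contexts $V$. ${\tt Value}^{\tt RL}$: $S ::= \langle\cdot\rangle \mid S\,L\langle v\rangle \mid t\,S \mid S[x\leftarrow t]$; $\mapsto_{\mathtt m}$ = dBv; $\mapsto_{\mathtt e}$ = lsv w.r.t. contexts $S$. ${\tt Need}$: $N ::= \langle\cdot\rangle \mid N\,t \mid N[x\leftarrow t] \mid N'\langle x\rangle[x\leftarrow N]$; $\mapsto_{\mathtt m}$ = dB; $\mapsto_{\mathtt e}$ = lsv w.r.t. contexts $N$. The reduction relations are $\multimap_{\mathtt m} := E\langle\mapsto_{\mathtt m}\rangle$ and $\multimap_{\mathtt e}:=E\langle\mapsto_{\mathtt e}\rangle$ for $E$ ranging over evaluation contexts of the calculus, and $\multimap:=\multimap_{\mathtt m}\cup\multimap_{\mathtt e}$. *)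

theory Defs
  imports Main
begin

text \<open>Terms up to alpha-equivalence, represented with de Bruijn indices.
  Both Lam t and ES t u (the explicit substitution t[x<-u]) bind index 0 in t;
  u in ES t u is not under the binder.\<close>
datatype trm = Var nat | Lam trm | App trm trm | ES trm trm

text \<open>General one-hole contexts (hole may be under binders; plugging captures).\<close>
datatype ctx = Hole | CAppL ctx trm | CAppR trm ctx | CLam ctx
  | CESL ctx trm | CESR trm ctx

fun plug :: "ctx \<Rightarrow> trm \<Rightarrow> trm" where
  "plug Hole s = s"
| "plug (CAppL C t) s = App (plug C s) t"
| "plug (CAppR t C) s = App t (plug C s)"
| "plug (CLam C) s = Lam (plug C s)"
| "plug (CESL C t) s = ES (plug C s) t"
| "plug (CESR t C) s = ES t (plug C s)"

fun bdepth :: "ctx \<Rightarrow> nat" where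
  "bdepth Hole = 0"
| "bdepth (CAppL C t) = bdepth C"
| "bdepth (CAppR t C) = bdepth C"
| "bdepth (CLam C) = Suc (bdepth C)"
| "bdepth (CESL C t) = Suc (bdepth C)"
| "bdepth (CESR t C) = bdepth C"

definition is_value :: "trm \<Rightarrow> bool" where
  "is_value t \<longleftrightarrow> (\<exists>b. t = Lam b)"

inductive is_L :: "ctx \<Rightarrow> bool" where
  "is_L Hole"
| "is_L L \<Longrightarrow> is_L (CESL L t)"

inductive is_H :: "ctx \<Rightarrow> bool" where
  "is_H Hole"
| "is_H H \<Longrightarrow> is_H (CAppL H t)"
| "is_H H \<Longrightarrow> is_H (CESL H t)"

inductive is_V :: "ctx \<Rightarrow> bool" where
  "is_V Hole"
| "is_V V \<Longrightarrow> is_V (CAppL V t)"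
| "is_L L \<Longrightarrow> is_value v \<Longrightarrow> is_V V \<Longrightarrow> is_V (CAppR (plug L v) V)"
| "is_V V \<Longrightarrow> is_V (CESL V t)"

inductive is_S :: "ctx \<Rightarrow> bool" where
  "is_S Hole"
| "is_S S \<Longrightarrow> is_L L \<Longrightarrow> is_value v \<Longrightarrow> is_S (CAppL S (plug L v))"
| "is_S S \<Longrightarrow> is_S (CAppR t S)"
| "is_S S \<Longrightarrow> is_S (CESL S t)"

text \<open>Need contexts; the clause N'<x>[x<-N] requires that N' does not capture x,
  i.e. the variable at the hole of N' is the one bound by the outer ES.\<close>
inductive is_N :: "ctx \<Rightarrow> bool" where
  "is_N Hole"
| "is_N N \<Longrightarrow> is_N (CAppL N t)"
| "is_N N \<Longrightarrow> is_N (CESL N t)"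
| "is_N N' \<Longrightarrow> is_N N \<Longrightarrow> is_N (CESR (plug N' (Var (bdepth N'))) N)"

definition dB_redex :: "trm \<Rightarrow> bool" where
  "dB_redex r \<longleftrightarrow> (\<exists>L t u. is_L L \<and> r = App (plug L (Lam t)) u)"

definition dBv_redex :: "trm \<Rightarrow> bool" where
  "dBv_redex r \<longleftrightarrow> (\<exists>L L' t v. is_L L \<and> is_L L' \<and> is_value v
      \<and> r = App (plug L (Lam t)) (plug L' v))"

text \<open>ls / lsv w.r.t. a family of contexts P: C<x>[x<-u] with C not capturing x.\<close>
definition ls_redex :: "(ctx \<Rightarrow> bool) \<Rightarrow> trm \<Rightarrow> bool" where
  "ls_redex P r \<longleftrightarrow> (\<exists>C u. P C \<and> r = ES (plug C (Var (bdepth C))) u)"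

definition lsv_redex :: "(ctx \<Rightarrow> bool) \<Rightarrow> trm \<Rightarrow> bool" where
  "lsv_redex P r \<longleftrightarrow> (\<exists>C L v. P C \<and> is_L L \<and> is_value v
      \<and> r = ES (plug C (Var (bdepth C))) (plug L v))"

datatype calculus = Name | ValueLR | ValueRL | Need

fun evctx :: "calculus \<Rightarrow> ctx \<Rightarrow> bool" where
  "evctx Name = is_H"
| "evctx ValueLR = is_V"
| "evctx ValueRL = is_S"
| "evctx Need = is_N"

fun m_redex :: "calculus \<Rightarrow> trm \<Rightarrow> bool" where
  "m_redex Name = dB_redex"
| "m_redex ValueLR = dBv_redex"
| "m_redex ValueRL = dBv_redex"
| "m_redex Need = dB_redex"

fun e_redex :: "calculus \<Rightarrow> trm \<Rightarrow> bool" where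
  "e_redex Name = ls_redex is_H"
| "e_redex ValueLR = lsv_redex is_V"
| "e_redex ValueRL = lsv_redex is_S"
| "e_redex Need = lsv_redex is_N"

definition redex :: "calculus \<Rightarrow> trm \<Rightarrow> bool" where
  "redex c r \<longleftrightarrow> m_redex c r \<or> e_redex c r"

end

theory Submission
  imports Defs
begin

text \<open>Call a pair (E, a) with E an evaluation context a focus if a is a redex or a variable
  not captured by E. We show that every term has at most one decomposition E\<langle>a\<rangle> into a focus,
  by induction on the term. Variables must be admitted as foci because both the ls/lsv redexes
  C\<langle>x\<rangle>[x\<leftarrow>u] and the Need contexts N'\<langle>x\<rangle>[x\<leftarrow>N] contain a variable in focus of a
  subcontext; uniqueness for the subterm C\<langle>x\<rangle> then rules out any competing decomposition that
  enters the body of the substitution. The remaining conflicts are all of one kind: some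
  calculus requires an answer L\<langle>\<lambda>x.t\<rangle> at a position where the other decomposition has its
  focus, and no answer contains a focus.\<close>

definition is_answer :: "trm \<Rightarrow> bool" where
  "is_answer t \<longleftrightarrow> (\<exists>L v. is_L L \<and> is_value v \<and> t = plug L v)"

inductive_simps is_H_simps: "is_H Hole" "is_H (CLam E)" "is_H (CAppL E t)" "is_H (CAppR t E)"
  "is_H (CESL E t)" "is_H (CESR t E)"
inductive_simps is_V_simps: "is_V Hole" "is_V (CLam E)" "is_V (CAppL E t)" "is_V (CAppR t E)"
  "is_V (CESL E t)" "is_V (CESR t E)"
inductive_simps is_S_simps: "is_S Hole" "is_S (CLam E)" "is_S (CAppL E t)" "is_S (CAppR t E)"
  "is_S (CESL E t)" "is_S (CESR t E)"
inductive_simps is_N_simps: "is_N Hole" "is_N (CLam E)" "is_N (CAppL E t)" "is_N (CAppR t E)"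
  "is_N (CESL E t)" "is_N (CESR t E)"

lemmas evctx_simps = is_H_simps is_V_simps is_S_simps is_N_simps

lemma evctx_Hole [simp]: "evctx c Hole"
  by (cases c) (simp_all add: evctx_simps)

lemma evctx_CLam [simp]: "\<not> evctx c (CLam E)"
  by (cases c) (simp_all add: evctx_simps)

lemma evctx_CAppL [simp]:
  "evctx c (CAppL E t) \<longleftrightarrow> evctx c E \<and> (c = ValueRL \<longrightarrow> is_answer t)"
  by (cases c) (auto simp: evctx_simps is_answer_def)

lemma evctx_CAppR [simp]:
  "evctx c (CAppR t E) \<longleftrightarrow> evctx c E \<and> (c = ValueLR \<and> is_answer t \<or> c = ValueRL)"
  by (cases c) (auto simp: evctx_simps is_answer_def)

lemma evctx_CESL [simp]: "evctx c (CESL E t) \<longleftrightarrow> evctx c E"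
  by (cases c) (simp_all add: evctx_simps)

lemma evctx_CESR [simp]:
  "evctx c (CESR t E) \<longleftrightarrow>
     c = Need \<and> evctx c E \<and> (\<exists>N. evctx c N \<and> t = plug N (Var (bdepth N)))"
  by (cases c) (auto simp: evctx_simps)

declare evctx.simps [simp del]

lemma redex_iff:
  "redex c r \<longleftrightarrow>
     (\<exists>L b u. is_L L \<and> r = App (plug L (Lam b)) u \<and> (c \<in> {ValueLR, ValueRL} \<longrightarrow> is_answer u)) \<or>
     (\<exists>C u. evctx c C \<and> r = ES (plug C (Var (bdepth C))) u \<and> (c \<noteq> Name \<longrightarrow> is_answer u))"
  by (cases c) (simp_all add: evctx.simps redex_def dB_redex_def dBv_redex_def ls_redex_def lsv_redex_def
      is_answer_def, blast+)

text \<open>With de Bruijn indices, Var j is not captured by E iff j \<ge> bdepth E.\<close>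
definition focus :: "calculus \<Rightarrow> ctx \<Rightarrow> trm \<Rightarrow> bool" where
  "focus c E a \<longleftrightarrow> evctx c E \<and> (redex c a \<or> (\<exists>j \<ge> bdepth E. a = Var j))"

lemma not_redex_Var [simp]: "\<not> redex c (Var j)"
  by (simp add: redex_iff)

lemma focus_Hole [simp]: "focus c Hole a \<longleftrightarrow> redex c a \<or> (\<exists>j. a = Var j)"
  by (simp add: focus_def)

lemma focus_CLam [simp]: "\<not> focus c (CLam E) a"
  by (simp add: focus_def)

lemma focus_CAppL [simp]:
  "focus c (CAppL E t) a \<longleftrightarrow> focus c E a \<and> (c = ValueRL \<longrightarrow> is_answer t)"
  by (auto simp: focus_def)

lemma focus_CAppR [simp]:
  "focus c (CAppR t E) a \<longleftrightarrow> focus c E a \<and> (c = ValueLR \<and> is_answer t \<or> c = ValueRL)"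
  by (auto simp: focus_def)

lemma focus_CESL [simp]: "focus c (CESL E t) a \<longleftrightarrow> focus c E a \<and> a \<noteq> Var (bdepth E)"
  by (auto simp: focus_def)

lemma focus_CESR [simp]:
  "focus c (CESR t E) a \<longleftrightarrow>
     focus c E a \<and> c = Need \<and> (\<exists>N. evctx c N \<and> t = plug N (Var (bdepth N)))"
  by (auto simp: focus_def)

lemma focus_neq_answer: "is_L L \<Longrightarrow> focus c E a \<Longrightarrow> plug E a \<noteq> plug L (Lam b)"
proof (induction L arbitrary: E a rule: is_L.induct)
  case 1
  then show ?case by (cases E) (auto simp: redex_iff)
next
  case (2 L u)
  have "focus c N (Var (bdepth N))" if "evctx c N" for N
    using that by (simp add: focus_def)
  with 2 show ?case
    by (cases E) (auto simp: redex_iff dest: sym)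
qed

lemma focus_not_answer: "focus c E a \<Longrightarrow> \<not> is_answer (plug E a)"
  unfolding is_answer_def is_value_def using focus_neq_answer by blast

lemma focus_App_cases:
  assumes "focus c E a" and "plug E a = App t1 t2"
  obtains "E = Hole" and "redex c (App t1 t2)" and "a = App t1 t2"
  | E' where "E = CAppL E' t2" and "focus c E' a" and "plug E' a = t1"
      and "c = ValueRL \<longrightarrow> is_answer t2"
  | E' where "E = CAppR t1 E'" and "focus c E' a" and "plug E' a = t2"
      and "c = ValueLR \<and> is_answer t1 \<or> c = ValueRL"
  using assms by (cases E) auto

lemma focus_ES_cases:
  assumes "focus c E a" and "plug E a = ES t1 t2"
  obtains "E = Hole" and "redex c (ES t1 t2)" and "a = ES t1 t2"
  | E' where "E = CESL E' t2" and "focus c E' a" and "a \<noteq> Var (bdepth E')" and "plug E' a = t1"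
  | E' N where "E = CESR t1 E'" and "focus c E' a" and "plug E' a = t2" and "c = Need"
      and "evctx c N" and "t1 = plug N (Var (bdepth N))"
  using assms by (cases E) auto

lemma focus_App_redex_Hole:
  assumes "focus c E a" and "plug E a = App t1 t2" and "redex c (App t1 t2)"
  shows "E = Hole"
  using assms(1,2)
proof (cases rule: focus_App_cases)
  case (2 E')
  with assms(3) show ?thesis by (auto simp: redex_iff focus_neq_answer)
next
  case (3 E')
  with assms(3) show ?thesis by (auto simp: redex_iff focus_not_answer)
qed

definition unique_decomp :: "calculus \<Rightarrow> trm \<Rightarrow> bool" where
  "unique_decomp c t \<longleftrightarrow>
     (\<forall>E1 a1 E2 a2. focus c E1 a1 \<longrightarrow> focus c E2 a2 \<longrightarrow> plug E1 a1 = t \<longrightarrow> plug E2 a2 = t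
        \<longrightarrow> E1 = E2 \<and> a1 = a2)"

lemma unique_decompI:
  assumes "\<And>E1 a1 E2 a2. focus c E1 a1 \<Longrightarrow> focus c E2 a2 \<Longrightarrow> plug E1 a1 = t \<Longrightarrow> plug E2 a2 = t
      \<Longrightarrow> E1 = E2 \<and> a1 = a2"
  shows "unique_decomp c t"
  using assms by (auto simp: unique_decomp_def)

lemma unique_decompD:
  "unique_decomp c t \<Longrightarrow> focus c E1 a1 \<Longrightarrow> focus c E2 a2 \<Longrightarrow> plug E1 a1 = t \<Longrightarrow> plug E2 a2 = t
    \<Longrightarrow> E1 = E2 \<and> a1 = a2"
  by (auto simp: unique_decomp_def)

lemma plug_eq_Var: "plug E a = Var j \<longleftrightarrow> E = Hole \<and> a = Var j"
  by (cases E) auto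

lemma unique_decomp_Var: "unique_decomp c (Var j)"
  by (rule unique_decompI) (simp add: plug_eq_Var)

lemma plug_eq_Lam: "plug E a = Lam b \<longleftrightarrow> E = Hole \<and> a = Lam b \<or> (\<exists>E'. E = CLam E' \<and> plug E' a = b)"
  by (cases E) auto

lemma unique_decomp_Lam: "unique_decomp c (Lam b)"
  by (rule unique_decompI) (auto simp: plug_eq_Lam)

lemma unique_decomp_App:
  assumes IH1: "unique_decomp c t1" and IH2: "unique_decomp c t2"
  shows "unique_decomp c (App t1 t2)"
proof (rule unique_decompI)
  fix E1 a1 E2 a2
  assume d1: "focus c E1 a1" "plug E1 a1 = App t1 t2"
    and d2: "focus c E2 a2" "plug E2 a2 = App t1 t2"
  from d1 show "E1 = E2 \<and> a1 = a2"
  proof (cases rule: focus_App_cases)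
    case 1
    with focus_App_redex_Hole[OF d2] d2(2) show ?thesis by simp
  next
    case L1: (2 E1')
    from d2 show ?thesis
    proof (cases rule: focus_App_cases)
      case 1
      with focus_App_redex_Hole[OF d1] L1 show ?thesis by simp
    next
      case (2 E2')
      with L1 unique_decompD[OF IH1] show ?thesis by blast
    next
      case (3 E2')
      with L1 focus_not_answer show ?thesis by blast
    qed
  next
    case R1: (3 E1')
    from d2 show ?thesis
    proof (cases rule: focus_App_cases)
      case 1
      with focus_App_redex_Hole[OF d1] R1 show ?thesis by simp
    next
      case (2 E2')
      with R1 focus_not_answer show ?thesis by blast
    next
      case (3 E2')
      with R1 unique_decompD[OF IH2] show ?thesis by blast
    qed
  qed
qed

lemma plug_bound_Var_not_focus:
  assumes "unique_decomp c t" and "focus c E a" and "plug E a = t" and "a \<noteq> Var (bdepth E)"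
    and "evctx c N"
  shows "t \<noteq> plug N (Var (bdepth N))"
proof
  assume "t = plug N (Var (bdepth N))"
  moreover have "focus c N (Var (bdepth N))"
    using assms(5) by (simp add: focus_def)
  ultimately show False
    using unique_decompD[OF assms(1,2)] assms(3,4) by blast
qed

lemma focus_ES_redex_Hole:
  assumes "unique_decomp c t1"
    and "focus c E a" and "plug E a = ES t1 t2" and "redex c (ES t1 t2)"
  shows "E = Hole"
  using assms(2,3)
proof (cases rule: focus_ES_cases)
  case (2 E')
  from assms(4) obtain C where "evctx c C" and "t1 = plug C (Var (bdepth C))"
    by (auto simp: redex_iff)
  with plug_bound_Var_not_focus[OF assms(1) 2(2,4,3)] show ?thesis by blast
next
  case (3 E')
  with assms(4) show ?thesis by (auto simp: redex_iff focus_not_answer)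
qed

lemma unique_decomp_ES:
  assumes IH1: "unique_decomp c t1" and IH2: "unique_decomp c t2"
  shows "unique_decomp c (ES t1 t2)"
proof (rule unique_decompI)
  fix E1 a1 E2 a2
  assume d1: "focus c E1 a1" "plug E1 a1 = ES t1 t2"
    and d2: "focus c E2 a2" "plug E2 a2 = ES t1 t2"
  from d1 show "E1 = E2 \<and> a1 = a2"
  proof (cases rule: focus_ES_cases)
    case 1
    with focus_ES_redex_Hole[OF IH1 d2] d2(2) show ?thesis by simp
  next
    case L1: (2 E1')
    from d2 show ?thesis
    proof (cases rule: focus_ES_cases)
      case 1
      with focus_ES_redex_Hole[OF IH1 d1] L1 show ?thesis by simp
    next
      case (2 E2')
      with L1 unique_decompD[OF IH1] show ?thesis by blast
    next
      case (3 E2')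
      with L1 plug_bound_Var_not_focus[OF IH1] show ?thesis by blast
    qed
  next
    case R1: (3 E1' N)
    from d2 show ?thesis
    proof (cases rule: focus_ES_cases)
      case 1
      with focus_ES_redex_Hole[OF IH1 d1] R1 show ?thesis by simp
    next
      case (2 E2')
      with R1 plug_bound_Var_not_focus[OF IH1] show ?thesis by blast
    next
      case (3 E2')
      with R1 unique_decompD[OF IH2] show ?thesis by blast
    qed
  qed
qed

lemma unique_decomp: "unique_decomp c t"
  by (induction t) (simp_all add: unique_decomp_Var unique_decomp_Lam unique_decomp_App unique_decomp_ES)

theorem mainTheorem1:
  fixes c :: calculus and E1 E2 :: ctx and r1 r2 :: trm
  assumes "evctx c E1" and "evctx c E2"
    and "redex c r1" and "redex c r2"
    and "plug E1 r1 = plug E2 r2"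
  shows "E1 = E2 \<and> r1 = r2"
proof -
  have "focus c E1 r1" and "focus c E2 r2"
    using assms(1-4) by (simp_all add: focus_def)
  with unique_decompD[OF unique_decomp] assms(5) show ?thesis by blast
qed

end
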